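(* Let $\varepsilon\in(0,1]$, $L\in[0,\infty)$, $q\in(1,\infty)$, $\alpha\in[0,\infty)\setminus\{1\}$, let $f\colon\mathbb R\to\mathbb R$ satisfy $|f(x)-f(y)|\le L|x-y|$ for all $x,y\in\mathbb R$, and let $a\in C(\mathbb R,\mathbb R)$ satisfy $a(x)=\max\{x,\alpha x\}$ for all $x\in\mathbb R$. Then there exists $\mathbf G\in\mathbf N$ such that (i) $\mathcal R_a(\mathbf G)\in C(\mathbb R,\mathbb R)$; (ii) $\mathcal H(\mathbf G)=1$; (iii) $|(\mathcal R_a(\mathbf G))(x)-(\mathcal R_a(\mathbf G))(y)|\le L|x-y|$ for all $x,y\in\mathbb R$; (iv) $|(\mathcal R_a(\mathbf G))(x)-f(x)|\le\varepsilon\max\{1,|x|^q\}$ for all $x\in\mathbb R$; (v) $\mathbb D_1(\mathbf G)\le4(\max\{1,2L\})^{q/(q-1)}\varepsilon^{-q/(q-1)}+2$; and (vi) $\mathcal P(\mathbf G)=3\mathbb D_1(\mathbf G)+1\le24(\max\{1,2L\})^{q/(q-1)}\varepsilon^{-q/(q-1)}$.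
   Context: Artificial neural networks (ANNs). Let $\mathbb N=\{1,2,\dots\}$ and $\mathbf N=\bigcup_{L\in\mathbb N}\bigcup_{l_0,\dots,l_L\in\mathbb N}\prod_{k=1}^L(\mathbb R^{l_k\times l_{k-1}}\times\mathbb R^{l_k})$. For $\Phi=((W_1,B_1),\dots,(W_L,B_L))$ in the $(l_0,\dots,l_L)$ component, $\mathcal P(\Phi)=\sum_{k=1}^Ll_k(l_{k-1}+1)$, $\mathcal H(\Phi)=L-1$, $\mathbb D_1(\Phi)=l_1$. For $a\in C(\mathbb R,\mathbb R)$ the realization $\mathcal R_a(\Phi)\colon\mathbb R^{l_0}\to\mathbb R^{l_L}$ is $(\mathcal R_a(\Phi))(x_0)=W_Lx_{L-1}+B_L$ with $x_k=\mathfrak M_{a,l_k}(W_kx_{k-1}+B_k)$, $k=1,\dots,L-1$, where $\mathfrak M_{a,m}$ applies $a$ componentwise. *)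

theory Defs
  imports "HOL-Analysis.Analysis"
begin

text \<open>An ANN is a nonempty list of layers (W_k, B_k); W_k is a list of l_k rows,
  each a list of length l_(k-1); B_k is a list of length l_k. All l_k are at least 1.\<close>

type_synonym layer = "real list list \<times> real list"

fun dims_ok :: "nat \<Rightarrow> layer list \<Rightarrow> bool" where
  "dims_ok n [] = True"
| "dims_ok n ((W, B) # \<Phi>) =
     (1 \<le> length W \<and> length B = length W \<and> (\<forall>r\<in>set W. length r = n)
      \<and> dims_ok (length W) \<Phi>)"

definition in_dim :: "layer list \<Rightarrow> nat" where
  "in_dim \<Phi> = length (hd (fst (hd \<Phi>)))"

definition out_dim :: "layer list \<Rightarrow> nat" where
  "out_dim \<Phi> = length (fst (last \<Phi>))"

definition is_ANN :: "layer list \<Rightarrow> bool" where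
  "is_ANN \<Phi> \<longleftrightarrow> \<Phi> \<noteq> [] \<and> 1 \<le> in_dim \<Phi> \<and> dims_ok (in_dim \<Phi>) \<Phi>"

definition ann_params :: "layer list \<Rightarrow> nat" where
  "ann_params \<Phi> = sum_list (map (\<lambda>(W, B). length W * (length (hd W) + 1)) \<Phi>)"

definition ann_hidden :: "layer list \<Rightarrow> nat" where
  "ann_hidden \<Phi> = length \<Phi> - 1"

definition ann_D1 :: "layer list \<Rightarrow> nat" where
  "ann_D1 \<Phi> = length (fst (hd \<Phi>))"

definition matvec :: "real list list \<Rightarrow> real list \<Rightarrow> real list" where
  "matvec W x = map (\<lambda>r. sum_list (map2 (*) r x)) W"

definition affine :: "layer \<Rightarrow> real list \<Rightarrow> real list" where
  "affine l x = map2 (+) (matvec (fst l) x) (snd l)"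

fun realize :: "(real \<Rightarrow> real) \<Rightarrow> layer list \<Rightarrow> real list \<Rightarrow> real list" where
  "realize a [] x = x"
| "realize a [l] x = affine l x"
| "realize a (l # l' # \<Phi>) x = realize a (l' # \<Phi>) (map a (affine l x))"

end

theory Submission
  imports Defs
begin

text \<open>
  Interpolate f piecewise linearly on an equidistant grid of mesh h over [-R, R] and extend
  constantly outside. The interpolant is L-Lipschitz and within 2 L h of f on [-R, R]; outside
  it differs from f by at most L |x|, which is below \<epsilon> |x|^q once
  |x| \<ge> R = (M/\<epsilon>)^(1/(q-1)), where M = max 1 (2 L). Its increment on a grid cell is, up to
  a constant, the difference of two leaky ReLUs shifted to the cell's endpoints, so a network
  with one hidden layer of width 2N realizes it; N = \<lceil>2 (M/\<epsilon>)^(q/(q-1))\<rceil> makes M h \<le> \<epsilon>.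
\<close>

definition grid :: "real \<Rightarrow> real \<Rightarrow> nat \<Rightarrow> real" where
  "grid x0 h i = x0 + real i * h"

definition slope :: "(real \<Rightarrow> real) \<Rightarrow> real \<Rightarrow> real \<Rightarrow> nat \<Rightarrow> real" where
  "slope f x0 h i = (f (grid x0 h (Suc i)) - f (grid x0 h i)) / h"

definition clip :: "real \<Rightarrow> real \<Rightarrow> real \<Rightarrow> real" where
  "clip u v x = min (max x u) v"

text \<open>The i-th summand ramps from 0 to f t(i+1) - f t(i) across the cell [t(i), t(i+1)] of the grid t,
  so this is the piecewise linear interpolant of f at the nodes, constant outside [t(0), t(N)].\<close>
definition pl_interp :: "(real \<Rightarrow> real) \<Rightarrow> real \<Rightarrow> real \<Rightarrow> nat \<Rightarrow> real \<Rightarrow> real" where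
  "pl_interp f x0 h N x =
     f x0 + (\<Sum>i<N. slope f x0 h i * (clip (grid x0 h i) (grid x0 h (Suc i)) x - grid x0 h i))"

lemma grid_Suc: "grid x0 h (Suc i) = grid x0 h i + h"
  by (simp add: grid_def algebra_simps)

lemma grid_ge_start: "0 \<le> h \<Longrightarrow> x0 \<le> grid x0 h i"
  by (simp add: grid_def)

lemma abs_slope_le:
  assumes "0 < h" and "\<And>x y. \<bar>f x - f y\<bar> \<le> L * \<bar>x - y\<bar>"
  shows "\<bar>slope f x0 h i\<bar> \<le> L"
proof -
  have "\<bar>f (grid x0 h (Suc i)) - f (grid x0 h i)\<bar> \<le> L * h"
    using assms(1) assms(2)[of "grid x0 h (Suc i)" "grid x0 h i"] by (simp add: grid_Suc)
  then show ?thesis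
    using \<open>0 < h\<close> by (simp add: slope_def abs_divide divide_le_eq)
qed

lemma pl_interp_below:
  assumes "0 < h" and "x \<le> x0"
  shows "pl_interp f x0 h N x = f x0"
proof -
  have "clip (grid x0 h i) (grid x0 h (Suc i)) x = grid x0 h i" for i
    using assms grid_ge_start[of h x0 i] by (simp add: clip_def grid_Suc)
  then show ?thesis by (simp add: pl_interp_def)
qed

lemma pl_interp_above:
  assumes "0 < h" and "grid x0 h N \<le> x"
  shows "pl_interp f x0 h N x = f (grid x0 h N)"
  using assms(2)
proof (induction N)
  case 0
  then show ?case by (simp add: pl_interp_def grid_def)
next
  case (Suc N)
  then have "pl_interp f x0 h N x = f (grid x0 h N)"
    using \<open>0 < h\<close> by (simp add: grid_Suc)
  moreover have "clip (grid x0 h N) (grid x0 h (Suc N)) x = grid x0 h N + h"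
    using Suc.prems by (simp add: clip_def grid_Suc)
  ultimately show ?case
    using \<open>0 < h\<close> by (simp add: pl_interp_def slope_def grid_Suc)
qed

lemma pl_interp_approx:
  assumes h: "0 < h" and L: "0 \<le> L" and lip: "\<And>x y. \<bar>f x - f y\<bar> \<le> L * \<bar>x - y\<bar>"
  shows "\<bar>pl_interp f x0 h N x - f (clip x0 (grid x0 h N) x)\<bar> \<le> 2 * L * h"
proof (induction N)
  case 0
  then show ?case using h L by (simp add: pl_interp_def grid_def clip_def)
next
  case (Suc N)
  let ?t = "grid x0 h N" and ?s = "slope f x0 h N"
  have start: "x0 \<le> ?t" using grid_ge_start h by simp
  have step: "pl_interp f x0 h (Suc N) x
      = pl_interp f x0 h N x + ?s * (clip ?t (?t + h) x - ?t)"
    by (simp add: pl_interp_def grid_Suc)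
  show ?case
  proof (cases "x \<le> ?t")
    case True
    then have "clip ?t (?t + h) x = ?t" "clip x0 (?t + h) x = clip x0 ?t x"
      using h start by (auto simp: clip_def)
    then show ?thesis using Suc step by (simp add: grid_Suc)
  next
    case False
    define y where "y = min x (?t + h)"
    have y: "?t \<le> y" "y - ?t \<le> h" "clip ?t (?t + h) x = y" "clip x0 (?t + h) x = y"
      using False h start by (auto simp: y_def clip_def)
    have "pl_interp f x0 h (Suc N) x - f (clip x0 (grid x0 h (Suc N)) x)
        = (f ?t - f y) + ?s * (y - ?t)"
      using pl_interp_above[OF h, of x0 N x f] False step y by (simp add: grid_Suc)
    also have "\<bar>\<dots>\<bar> \<le> L * (y - ?t) + L * (y - ?t)"
      using lip[of ?t y] mult_right_mono[OF abs_slope_le[OF h lip, of x0 N], of "y - ?t"] y(1)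
      by (simp add: abs_mult abs_triangle_ineq[THEN order_trans])
    also have "\<dots> \<le> 2 * L * h"
      using mult_left_mono[OF y(2) L] by linarith
    finally show ?thesis .
  qed
qed

lemma sum_clip_telescope:
  assumes "0 < h"
  shows "(\<Sum>i<N. clip (grid x0 h i) (grid x0 h (Suc i)) x - grid x0 h i)
       = clip x0 (grid x0 h N) x - x0"
proof (induction N)
  case 0
  then show ?case by (simp add: clip_def grid_def)
next
  case (Suc N)
  have "x0 \<le> grid x0 h N" using grid_ge_start assms by simp
  then have "clip x0 (grid x0 h N) x + clip (grid x0 h N) (grid x0 h (Suc N)) x - grid x0 h N
      = clip x0 (grid x0 h (Suc N)) x"
    using assms unfolding clip_def grid_Suc by (simp add: min_def max_def)
  then show ?case using Suc by simp
qed

lemma pl_interp_lipschitz: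
  assumes h: "0 < h" and L: "0 \<le> L" and lip: "\<And>x y. \<bar>f x - f y\<bar> \<le> L * \<bar>x - y\<bar>"
  shows "L-lipschitz_on UNIV (pl_interp f x0 h N)"
proof -
  define c where "c z i = clip (grid x0 h i) (grid x0 h (Suc i)) z" for z i
  have incr: "\<bar>pl_interp f x0 h N y - pl_interp f x0 h N x\<bar> \<le> L * (y - x)" if "x \<le> y" for x y
  proof -
    have mono: "0 \<le> c y i - c x i" for i
      using that by (simp add: c_def clip_def)
    have "\<bar>pl_interp f x0 h N y - pl_interp f x0 h N x\<bar> = \<bar>\<Sum>i<N. slope f x0 h i * (c y i - c x i)\<bar>"
      by (simp add: pl_interp_def c_def sum_subtractf[symmetric] right_diff_distrib)
    also have "\<dots> \<le> (\<Sum>i<N. L * (c y i - c x i))"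
      using abs_slope_le[OF h lip] mono
      by (auto simp: abs_mult intro!: sum_abs[THEN order_trans] sum_mono mult_right_mono)
    also have "\<dots> = L * ((\<Sum>i<N. c y i - grid x0 h i) - (\<Sum>i<N. c x i - grid x0 h i))"
      by (simp add: sum_distrib_left sum_subtractf[symmetric])
    also have "\<dots> = L * (clip x0 (grid x0 h N) y - clip x0 (grid x0 h N) x)"
      unfolding c_def sum_clip_telescope[OF h] by simp
    also have "\<dots> \<le> L * (y - x)"
      using that L by (intro mult_left_mono) (auto simp: clip_def min_def max_def)
    finally show ?thesis .
  qed
  show ?thesis
  proof (rule lipschitz_onI)
    fix x y :: real
    show "dist (pl_interp f x0 h N x) (pl_interp f x0 h N y) \<le> L * dist x y"
      using incr[of x y] incr[of y x] by (cases "x \<le> y") (auto simp: dist_real_def abs_minus_commute)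
  qed (rule L)
qed

lemma leaky_relu_decomp:
  fixes \<alpha> z :: real
  assumes "\<alpha> \<noteq> 1"
  shows "max z (\<alpha> * z) = \<bar>1 - \<alpha>\<bar> * max z 0 + min 1 \<alpha> * z"
proof (cases "1 < \<alpha>")
  case True
  then have "z \<le> \<alpha> * z \<longleftrightarrow> 0 \<le> z"
    using mult_le_cancel_right1[of z \<alpha>] by auto
  then show ?thesis using True by (cases "0 \<le> z") (simp_all add: max_def algebra_simps)
next
  case False
  with assms have "\<alpha> * z \<le> z \<longleftrightarrow> 0 \<le> z"
    using mult_le_cancel_right2[of \<alpha> z] by auto
  then show ?thesis using False by (cases "0 \<le> z") (simp_all add: max_def algebra_simps)
qed

lemma leaky_relu_shift_diff:
  fixes \<alpha> :: real
  assumes "\<alpha> \<noteq> 1" and "0 < h"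
  shows "max (x - T) (\<alpha> * (x - T)) - max (x - (T + h)) (\<alpha> * (x - (T + h)))
       = \<bar>1 - \<alpha>\<bar> * (clip T (T + h) x - T) + min 1 \<alpha> * h"
proof -
  have "max (x - T) (\<alpha> * (x - T)) - max (x - (T + h)) (\<alpha> * (x - (T + h)))
      = \<bar>1 - \<alpha>\<bar> * (max (x - T) 0 - max (x - (T + h)) 0) + min 1 \<alpha> * ((x - T) - (x - (T + h)))"
    unfolding leaky_relu_decomp[OF assms(1)] by (simp only: right_diff_distrib)
  also have "max (x - T) 0 - max (x - (T + h)) 0 = clip T (T + h) x - T"
    using assms(2) by (simp add: clip_def max_def min_def)
  finally show ?thesis by simp
qed

definition shallow_net :: "nat \<Rightarrow> (nat \<Rightarrow> real) \<Rightarrow> (nat \<Rightarrow> real) \<Rightarrow> real \<Rightarrow> layer list" where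
  "shallow_net n b v c =
     [(map (\<lambda>j. [1]) [0..<n], map (\<lambda>j. - b j) [0..<n]), ([map v [0..<n]], [c])]"

lemma realize_shallow_net:
  "realize a (shallow_net n b v c) [x] = [(\<Sum>j<n. v j * a (x - b j)) + c]"
proof -
  have "affine (map (\<lambda>j. [1]) [0..<n], map (\<lambda>j. - b j) [0..<n]) [x] = map (\<lambda>j. x - b j) [0..<n]"
    by (simp add: affine_def matvec_def zip_map_map zip_same_conv_map)
  then show ?thesis
    by (simp add: shallow_net_def affine_def matvec_def zip_map_map zip_same_conv_map
        sum_list_sum_nth atLeast0LessThan)
qed

lemma shallow_net_architecture:
  assumes "1 \<le> n"
  shows "is_ANN (shallow_net n b v c)" "in_dim (shallow_net n b v c) = 1"
    "out_dim (shallow_net n b v c) = 1" "ann_hidden (shallow_net n b v c) = 1"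
    "ann_D1 (shallow_net n b v c) = n" "ann_params (shallow_net n b v c) = 3 * n + 1"
  using assms by (simp_all add: shallow_net_def is_ANN_def in_dim_def out_dim_def
      ann_hidden_def ann_D1_def ann_params_def upt_conv_Cons)

lemma sum_lessThan_double: "(\<Sum>j<2 * N. F j) = (\<Sum>i<N. F (2 * i) + F (2 * i + 1))"
  for F :: "nat \<Rightarrow> 'a::comm_monoid_add"
  by (induction N) (simp_all add: sum.distrib ac_simps)

text \<open>Cell i of the grid contributes the neurons 2i and 2i+1, with biases at its two endpoints.\<close>
lemma pl_interp_leaky_relu_net:
  fixes \<alpha> :: real
  assumes "\<alpha> \<noteq> 1" and a: "\<And>x. a x = max x (\<alpha> * x)" and h: "0 < h" and "1 \<le> N"
  obtains G where "is_ANN G" "in_dim G = 1" "out_dim G = 1" "ann_hidden G = 1"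
    "ann_D1 G = 2 * N" "ann_params G = 3 * ann_D1 G + 1"
    "\<And>x. hd (realize a G [x]) = pl_interp f x0 h N x"
proof
  define g where "g = \<bar>1 - \<alpha>\<bar>"
  have g: "g \<noteq> 0" using assms(1) by (simp add: g_def)
  define v where "v j = (if even j then 1 else -1) * slope f x0 h (j div 2) / g" for j
  define b where "b j = grid x0 h (j div 2 + j mod 2)" for j
  define c where "c = f x0 - (\<Sum>i<N. slope f x0 h i * min 1 \<alpha> * h / g)"
  let ?G = "shallow_net (2 * N) b v c"
  show "is_ANN ?G" "in_dim ?G = 1" "out_dim ?G = 1" "ann_hidden ?G = 1" "ann_D1 ?G = 2 * N"
    "ann_params ?G = 3 * ann_D1 ?G + 1"
    using shallow_net_architecture[of "2 * N"] \<open>1 \<le> N\<close> by simp_all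
  fix x
  have cell: "v (2 * i) * a (x - b (2 * i)) + v (2 * i + 1) * a (x - b (2 * i + 1))
      = slope f x0 h i * (clip (grid x0 h i) (grid x0 h (Suc i)) x - grid x0 h i)
        + slope f x0 h i * min 1 \<alpha> * h / g" for i
  proof -
    have "v (2 * i) * a (x - b (2 * i)) + v (2 * i + 1) * a (x - b (2 * i + 1))
        = slope f x0 h i / g * (a (x - grid x0 h i) - a (x - (grid x0 h i + h)))"
      by (simp add: v_def b_def grid_Suc right_diff_distrib)
    also have "\<dots> = slope f x0 h i / g * (g * (clip (grid x0 h i) (grid x0 h i + h) x - grid x0 h i)
        + min 1 \<alpha> * h)"
      unfolding a leaky_relu_shift_diff[OF assms(1) h] g_def ..
    finally show ?thesis using g by (simp add: grid_Suc field_simps)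
  qed
  have "hd (realize a ?G [x])
      = (\<Sum>i<N. v (2 * i) * a (x - b (2 * i)) + v (2 * i + 1) * a (x - b (2 * i + 1))) + c"
    by (simp only: realize_shallow_net sum_lessThan_double list.sel)
  then show "hd (realize a ?G [x]) = pl_interp f x0 h N x"
    by (simp only: cell sum.distrib) (simp add: c_def pl_interp_def)
qed

lemma pl_interp_weighted_error:
  fixes R :: real
  assumes h: "0 < h" and L: "0 \<le> L" and lip: "\<And>x y. \<bar>f x - f y\<bar> \<le> L * \<bar>x - y\<bar>"
    and span: "real N * h = 2 * R" and mesh: "2 * L * h \<le> \<epsilon>"
    and tail: "\<And>x. R \<le> \<bar>x\<bar> \<Longrightarrow> L * \<bar>x\<bar> \<le> \<epsilon> * \<bar>x\<bar> powr q"
  shows "\<bar>pl_interp f (- R) h N x - f x\<bar> \<le> \<epsilon> * max 1 (\<bar>x\<bar> powr q)"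
proof -
  have end_R: "grid (- R) h N = R" using span by (simp add: grid_def)
  have "0 \<le> R" using span h by (smt (verit) of_nat_0_le_iff zero_le_mult_iff)
  have "0 \<le> \<epsilon>" using mesh h L by (smt (verit) mult_nonneg_nonneg)
  then have bounds: "\<epsilon> \<le> \<epsilon> * max 1 (\<bar>x\<bar> powr q)" "\<epsilon> * \<bar>x\<bar> powr q \<le> \<epsilon> * max 1 (\<bar>x\<bar> powr q)"
    by (simp_all add: mult_left_mono mult_le_cancel_left1)
  consider "x \<le> - R" | "R \<le> x" | "- R < x" "x < R" by linarith
  then show ?thesis
  proof cases
    case 1
    then have "\<bar>pl_interp f (- R) h N x - f x\<bar> = \<bar>f (- R) - f x\<bar>"
      using pl_interp_below[OF h] by simp
    also have "\<dots> \<le> L * \<bar>x\<bar>"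
      using lip[of "- R" x] mult_left_mono[OF _ L, of "\<bar>- R - x\<bar>" "\<bar>x\<bar>"] 1 \<open>0 \<le> R\<close> by simp
    moreover have "R \<le> \<bar>x\<bar>" using 1 by linarith
    ultimately show ?thesis using tail[of x] bounds(2) by linarith
  next
    case 2
    then have "\<bar>pl_interp f (- R) h N x - f x\<bar> = \<bar>f R - f x\<bar>"
      using pl_interp_above[OF h, of "- R" N x f] end_R by simp
    also have "\<dots> \<le> L * \<bar>x\<bar>"
      using lip[of R x] mult_left_mono[OF _ L, of "\<bar>R - x\<bar>" "\<bar>x\<bar>"] 2 \<open>0 \<le> R\<close> by simp
    moreover have "R \<le> \<bar>x\<bar>" using 2 by linarith
    ultimately show ?thesis using tail[of x] bounds(2) by linarith
  next
    case 3
    then have "clip (- R) (grid (- R) h N) x = x" by (simp add: end_R clip_def)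
    then show ?thesis using pl_interp_approx[OF h L lip, of "- R" N x] mesh bounds(1) by simp
  qed
qed

lemma linear_le_powr_beyond_root:
  fixes M \<epsilon> q :: real
  assumes "0 < M" "0 < \<epsilon>" "1 < q" and "(M / \<epsilon>) powr (1 / (q - 1)) \<le> \<bar>x\<bar>"
  shows "M * \<bar>x\<bar> \<le> \<epsilon> * \<bar>x\<bar> powr q"
proof -
  have "0 < (M / \<epsilon>) powr (1 / (q - 1))" using assms by simp
  then have x: "0 < \<bar>x\<bar>" using assms(4) by linarith
  have "M / \<epsilon> = ((M / \<epsilon>) powr (1 / (q - 1))) powr (q - 1)"
    using assms by (simp add: powr_powr)
  also have "\<dots> \<le> \<bar>x\<bar> powr (q - 1)"
    using assms by (intro powr_mono2) auto
  finally have "M \<le> \<epsilon> * \<bar>x\<bar> powr (q - 1)"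
    using assms(2) by (simp add: divide_le_eq mult.commute)
  then have "M * \<bar>x\<bar> \<le> \<epsilon> * (\<bar>x\<bar> powr (q - 1) * \<bar>x\<bar> powr 1)"
    using x by (simp add: mult_right_mono mult.assoc)
  also have "\<dots> = \<epsilon> * \<bar>x\<bar> powr q"
    by (subst powr_add[symmetric]) simp
  finally show ?thesis .
qed

lemma mesh_le_beyond_root:
  fixes M \<epsilon> q :: real
  assumes "0 < M" "0 < \<epsilon>" "1 < q" and N: "2 * (M / \<epsilon>) powr (q / (q - 1)) \<le> real N"
  shows "M * (2 * (M / \<epsilon>) powr (1 / (q - 1)) / real N) \<le> \<epsilon>"
proof -
  have "0 < real N" using N assms by (smt (verit) powr_gt_zero divide_pos_pos)
  have "M / \<epsilon> * (M / \<epsilon>) powr (1 / (q - 1)) = (M / \<epsilon>) powr (1 + 1 / (q - 1))"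
    using assms by (simp add: powr_add)
  also have "1 + 1 / (q - 1) = q / (q - 1)"
    using assms(3) by (simp add: field_simps)
  finally have "M * (2 * (M / \<epsilon>) powr (1 / (q - 1))) = \<epsilon> * (2 * (M / \<epsilon>) powr (q / (q - 1)))"
    using assms(2) by (simp add: field_simps)
  also have "\<dots> \<le> \<epsilon> * real N"
    using N assms(2) by simp
  finally show ?thesis
    using \<open>0 < real N\<close> by (simp add: divide_le_eq mult.commute)
qed

theorem mainTheorem17:
  fixes \<epsilon> L q \<alpha> :: real and f a :: "real \<Rightarrow> real"
  assumes "0 < \<epsilon>" "\<epsilon> \<le> 1" "0 \<le> L" "1 < q" "0 \<le> \<alpha>" "\<alpha> \<noteq> 1"
    and "\<And>x y. \<bar>f x - f y\<bar> \<le> L * \<bar>x - y\<bar>"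
    and "continuous_on UNIV a"
    and "\<And>x. a x = max x (\<alpha> * x)"
  shows "\<exists>G. is_ANN G \<and> in_dim G = 1 \<and> out_dim G = 1
     \<and> continuous_on UNIV (\<lambda>x. hd (realize a G [x]))
     \<and> ann_hidden G = 1
     \<and> (\<forall>x y. \<bar>hd (realize a G [x]) - hd (realize a G [y])\<bar> \<le> L * \<bar>x - y\<bar>)
     \<and> (\<forall>x. \<bar>hd (realize a G [x]) - f x\<bar> \<le> \<epsilon> * max 1 (\<bar>x\<bar> powr q))
     \<and> real (ann_D1 G) \<le> 4 * (max 1 (2 * L)) powr (q / (q - 1)) * \<epsilon> powr (- q / (q - 1)) + 2
     \<and> ann_params G = 3 * ann_D1 G + 1
     \<and> real (ann_params G) \<le> 24 * (max 1 (2 * L)) powr (q / (q - 1)) * \<epsilon> powr (- q / (q - 1))"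
proof -
  define M where "M = max 1 (2 * L)"
  define Q where "Q = (M / \<epsilon>) powr (q / (q - 1))"
  define R where "R = (M / \<epsilon>) powr (1 / (q - 1))"
  define N where "N = nat \<lceil>2 * Q\<rceil>"
  define h where "h = 2 * R / real N"
  have M: "1 \<le> M" "2 * L \<le> M" by (simp_all add: M_def)
  have Q_eq: "M powr (q / (q - 1)) * \<epsilon> powr (- q / (q - 1)) = Q"
  proof -
    have "\<epsilon> powr (- q / (q - 1)) = 1 / \<epsilon> powr (q / (q - 1))"
      by (simp add: powr_minus_divide)
    then show ?thesis using M assms(1) by (simp add: Q_def powr_divide)
  qed
  have "1 \<le> Q"
    using M assms(1,2,4) by (simp add: Q_def ge_one_powr_ge_zero le_divide_eq)
  then have N: "1 \<le> N" "2 * Q \<le> real N" "real N \<le> 2 * Q + 1"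
    using of_int_ceiling_le_add_one[of "2 * Q"] by (auto simp: N_def le_nat_iff)
  have h: "0 < h" "M * h \<le> \<epsilon>"
    using N M assms(1,4) mesh_le_beyond_root[of M \<epsilon> q N] by (simp_all add: h_def R_def Q_def)
  obtain G where G: "is_ANN G" "in_dim G = 1" "out_dim G = 1" "ann_hidden G = 1"
      "ann_D1 G = 2 * N" "ann_params G = 3 * ann_D1 G + 1"
      "\<And>x. hd (realize a G [x]) = pl_interp f (- R) h N x"
    using pl_interp_leaky_relu_net[OF assms(6,9) h(1) N(1)] by blast
  have lip: "L-lipschitz_on UNIV (pl_interp f (- R) h N)"
    using pl_interp_lipschitz[OF h(1) assms(3,7)] .
  have "\<bar>pl_interp f (- R) h N x - f x\<bar> \<le> \<epsilon> * max 1 (\<bar>x\<bar> powr q)" for x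
  proof (rule pl_interp_weighted_error[OF h(1) assms(3,7)])
    show "real N * h = 2 * R" using N(1) by (simp add: h_def)
    show "2 * L * h \<le> \<epsilon>" using M(2) h by (smt (verit) mult_right_mono)
    show "L * \<bar>y\<bar> \<le> \<epsilon> * \<bar>y\<bar> powr q" if "R \<le> \<bar>y\<bar>" for y
      using linear_le_powr_beyond_root[of M \<epsilon> q y] that M assms(1,3,4)
        mult_right_mono[of L M "\<bar>y\<bar>"] by (simp add: R_def)
  qed
  with G lip N Q_eq \<open>1 \<le> Q\<close> show ?thesis
    by (auto simp: M_def lipschitz_on_continuous_on dist_real_def intro!: exI[of _ G]
        dest: lipschitz_onD)
qed

end
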